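(* Let $G=(N,E)$ be a DAG. Then $\mathcal{P}^G=\mathcal{P}^{G^*}$ if and only if $\mathrm{pa}_G(s)$ and $\mathrm{ch}_G(s)$ are complete for all $s\in N$.
   Context: DAG: finite directed graph without directed cycles; $\mathrm{pa}_G(s)$, $\mathrm{ch}_G(s)$ = parents/children of $s$. $G^*=(N,\{(t,s):(s,t)\in E\})$ is $G$ with all edges reversed. Two nodes are joined if an edge connects them; a set is complete if every pair of its elements is joined. Each node $s$ has a state space $\mathsf{X}_s$ (finite set with counting measure, or finite-dimensional real vector space with Lebesgue measure $\mu_s$), $\mu=\otimes_s\mu_s$; $\mathcal{P}^G$ is the set of probability distributions on $\times_s\mathsf{X}_s$ with $\mu$-density $p(x)=\prod_{s}k^s(x_s\mid x_{\mathrm{pa}_G(s)})$ for some nonnegative measurable $k^s$ with $\int k^s(x_s\mid x_{\mathrm{pa}_G(s)})\,d\mu_s(x_s)=1$. *)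

theory Defs
  imports "HOL-Probability.Probability"
begin

text \<open>A DAG G = (N, E) is given by a node set N and an edge relation E (pairs (s,t) meaning s -> t).\<close>

definition pa :: "('n \<times> 'n) set \<Rightarrow> 'n \<Rightarrow> 'n set" where
  "pa E s = {t. (t, s) \<in> E}"

definition ch :: "('n \<times> 'n) set \<Rightarrow> 'n \<Rightarrow> 'n set" where
  "ch E s = {t. (s, t) \<in> E}"

definition reverse_edges :: "('n \<times> 'n) set \<Rightarrow> ('n \<times> 'n) set" where
  "reverse_edges E = {(t, s). (s, t) \<in> E}"

definition joined :: "('n \<times> 'n) set \<Rightarrow> 'n \<Rightarrow> 'n \<Rightarrow> bool" where
  "joined E a b \<longleftrightarrow> (a, b) \<in> E \<or> (b, a) \<in> E"

definition complete_set :: "('n \<times> 'n) set \<Rightarrow> 'n set \<Rightarrow> bool" where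
  "complete_set E A \<longleftrightarrow> (\<forall>a\<in>A. \<forall>b\<in>A. a \<noteq> b \<longrightarrow> joined E a b)"

text \<open>Admissible state spaces: a finite (nonempty) set with counting measure, or
  R^d (represented as functions on {..<d}) with the product of Lebesgue/Borel measures.\<close>
definition state_space :: "(nat \<Rightarrow> real) measure \<Rightarrow> bool" where
  "state_space Ms \<longleftrightarrow>
     (\<exists>A. finite A \<and> A \<noteq> {} \<and> Ms = count_space A) \<or>
     (\<exists>d. Ms = PiM {..<d} (\<lambda>_. lborel))"

text \<open>k s is a conditional kernel: k s z y = k^s(y | z), z a configuration of the parents.\<close>
definition is_kernel :: "('n \<Rightarrow> 'x measure) \<Rightarrow> 'n set \<Rightarrow> 'n \<Rightarrow> (('n \<Rightarrow> 'x) \<Rightarrow> 'x \<Rightarrow> real) \<Rightarrow> bool" where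
  "is_kernel M P s ks \<longleftrightarrow>
     (\<forall>z\<in>space (PiM P M). \<forall>y\<in>space (M s). 0 \<le> ks z y) \<and>
     (case_prod ks) \<in> borel_measurable (PiM P M \<Otimes>\<^sub>M M s) \<and>
     (\<forall>z\<in>space (PiM P M). (\<integral>\<^sup>+ y. ennreal (ks z y) \<partial>M s) = 1)"

definition DAG_model :: "'n set \<Rightarrow> ('n \<times> 'n) set \<Rightarrow> ('n \<Rightarrow> 'x measure) \<Rightarrow> ('n \<Rightarrow> 'x) measure set" where
  "DAG_model N E M = {P. prob_space P \<and>
     (\<exists>k. (\<forall>s\<in>N. is_kernel M (pa E s) s (k s)) \<and>
          P = density (PiM N M) (\<lambda>x. ennreal (\<Prod>s\<in>N. k s (restrict x (pa E s)) (x s))))}"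

end

theory Submission
  imports Defs
begin

text \<open>
  Sufficiency, by induction on the number of nodes: remove a sink \<open>t\<close> of \<open>G\<close>. By induction the
  factors of the remaining nodes can be rewritten along the reversed graph. Completeness of the
  parent and child sets makes \<open>V = {t} \<union> pa(t)\<close> a clique that contains the children of its
  members, so in \<open>G\<^sup>*\<close> no node of \<open>V\<close> has parents outside \<open>V\<close>. The reversed factors of \<open>pa(t)\<close>
  times the kernel of \<open>t\<close> form a density on \<open>V\<close>, and by the chain rule it factorizes along any
  acyclic orientation of the clique, in particular along \<open>G\<^sup>*\<close>.

  Necessity: if two parents \<open>a\<close>, \<open>b\<close> of \<open>s\<close> are not joined, let every node be a fair coin
  except \<open>s\<close>, which records whether the coins at \<open>a\<close> and \<open>b\<close> differ. Choose the names so that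
  \<open>b\<close> does not descend from \<open>a\<close>. On the \<open>G\<^sup>*\<close>-ancestral set of \<open>a\<close> and \<open>b\<close>, any
  \<open>G\<^sup>*\<close>-factorization would make the joint density of \<open>a\<close> and \<open>b\<close>, given the other coordinates,
  a product \<open>f(a) g(b)\<close>, which the exclusive-or pattern is not. Incomplete child sets are
  incomplete parent sets of \<open>G\<^sup>*\<close>.
\<close>

section \<open>Reversed edges and sinks\<close>

lemma reverse_edges_eq_converse: "reverse_edges E = E\<inverse>"
  by (auto simp: reverse_edges_def)

lemma pa_reverse_edges [simp]: "pa (reverse_edges E) s = ch E s"
  by (auto simp: pa_def ch_def reverse_edges_def)

lemma ch_reverse_edges [simp]: "ch (reverse_edges E) s = pa E s"
  by (auto simp: pa_def ch_def reverse_edges_def)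

lemma reverse_edges_reverse_edges [simp]: "reverse_edges (reverse_edges E) = E"
  by (auto simp: reverse_edges_def)

lemma acyclic_reverse_edges [simp]: "acyclic (reverse_edges E) \<longleftrightarrow> acyclic E"
  by (simp add: reverse_edges_eq_converse acyclic_converse)

lemma complete_set_reverse_edges [simp]: "complete_set (reverse_edges E) A \<longleftrightarrow> complete_set E A"
  by (auto simp: complete_set_def joined_def reverse_edges_def)

lemma reverse_edges_subset: "E \<subseteq> N \<times> N \<Longrightarrow> reverse_edges E \<subseteq> N \<times> N"
  by (auto simp: reverse_edges_def)

lemma pa_subset: "E \<subseteq> N \<times> N \<Longrightarrow> pa E s \<subseteq> N"
  by (auto simp: pa_def)

lemma complete_set_subset: "complete_set E A \<Longrightarrow> B \<subseteq> A \<Longrightarrow> complete_set E B"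
  by (auto simp: complete_set_def)

lemma complete_families_induced:
  assumes "\<forall>s\<in>N. complete_set E (pa E s) \<and> complete_set E (ch E s)" "S \<subseteq> N"
  shows "\<forall>s\<in>S. complete_set (E \<inter> S \<times> S) (pa (E \<inter> S \<times> S) s) \<and> complete_set (E \<inter> S \<times> S) (ch (E \<inter> S \<times> S) s)"
  using assms unfolding complete_set_def joined_def pa_def ch_def by blast

lemma finite_acyclic_obtain_sink:
  assumes "finite S" "S \<noteq> {}" "acyclic E"
  obtains t where "t \<in> S" "\<forall>u\<in>S. (t, u) \<notin> E"
proof -
  have "acyclic (E \<inter> S \<times> S)" using assms(3) by (rule acyclic_subset) blast
  moreover have "finite (E \<inter> S \<times> S)" using assms(1) by blast
  ultimately have "wf ((E \<inter> S \<times> S)\<inverse>)" by (rule finite_acyclic_wf_converse[rotated])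
  then obtain t where "t \<in> S" "\<And>u. (u, t) \<in> (E \<inter> S \<times> S)\<inverse> \<Longrightarrow> u \<notin> S"
    using assms(2) unfolding wf_eq_minimal by blast
  then show ?thesis using that by blast
qed

lemma sink_parents_clique:
  assumes compl: "\<forall>s\<in>N. complete_set E (pa E s) \<and> complete_set E (ch E s)"
    and EN: "E \<subseteq> N \<times> N" and "t \<in> N" and sink: "\<forall>u. (t, u) \<notin> E"
  defines "V \<equiv> insert t (pa E t)" and "E' \<equiv> E \<inter> (N - {t}) \<times> (N - {t})"
  shows "complete_set E V" "\<forall>c\<in>V. ch E c \<subseteq> V"
    "\<forall>c\<in>pa E t. ch E' c \<subseteq> pa E t" "\<forall>u\<in>N - V. ch E' u = ch E u"
proof -
  show "complete_set E V"
    using compl \<open>t \<in> N\<close> by (auto simp: V_def complete_set_def joined_def pa_def)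
  have child_of_parent: "d \<in> pa E t" if c: "(c, t) \<in> E" and d: "(c, d) \<in> E" "d \<noteq> t" for c d
  proof -
    have "c \<in> N" "t \<in> ch E c" "d \<in> ch E c" using c d EN by (auto simp: ch_def)
    then have "joined E d t" using compl d(2) by (auto simp: complete_set_def)
    then show ?thesis using sink by (auto simp: joined_def pa_def)
  qed
  show ch_V: "\<forall>c\<in>V. ch E c \<subseteq> V"
  proof (intro ballI subsetI)
    fix c d assume c: "c \<in> V" and "d \<in> ch E c"
    then have "(c, d) \<in> E" by (simp add: ch_def)
    with c sink child_of_parent show "d \<in> V"
      unfolding V_def pa_def by blast
  qed
  then show "\<forall>c\<in>pa E t. ch E' c \<subseteq> pa E t"
    by (auto simp: V_def E'_def ch_def)
  show "\<forall>u\<in>N - V. ch E' u = ch E u"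
    using EN by (auto simp: V_def E'_def ch_def pa_def)
qed

lemma descendant_not_parent:
  assumes "acyclic E" "(a, b) \<notin> E\<^sup>+" "(a, u) \<in> E\<^sup>* \<or> (b, u) \<in> E\<^sup>*"
  shows "(u, b) \<notin> E"
proof
  assume ub: "(u, b) \<in> E"
  from assms(3) show False
  proof
    assume "(a, u) \<in> E\<^sup>*"
    from this ub have "(a, b) \<in> E\<^sup>+" by (rule rtrancl_into_trancl1)
    with assms(2) show False ..
  next
    assume "(b, u) \<in> E\<^sup>*"
    from this ub have "(b, b) \<in> E\<^sup>+" by (rule rtrancl_into_trancl1)
    with assms(1) show False by (simp add: acyclic_def)
  qed
qed

section \<open>Almost-everywhere statements on finite products\<close>

lemma AE_obtain_in_set:
  assumes "AE x in M. P x" "S \<in> sets M" "emeasure M S \<noteq> 0"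
  obtains x where "x \<in> S" "P x"
proof -
  from assms(1) obtain Z where Z: "{x\<in>space M. \<not> P x} \<subseteq> Z" "Z \<in> null_sets M"
    by (auto simp: eventually_ae_filter)
  have "\<not> S \<subseteq> Z"
    using Z(2) assms(2,3) emeasure_mono[of S Z M] by (auto simp: null_sets_def)
  then show ?thesis
    using that Z(1) sets.sets_into_space[OF assms(2)] by blast
qed

context product_sigma_finite
begin

lemma distr_add_dim:
  assumes "finite I" "i \<notin> I"
  shows "distr (PiM I M \<Otimes>\<^sub>M M i) (PiM (insert i I) M) (\<lambda>(f, y). f(i := y)) = PiM (insert i I) M"
proof (rule PiM_eqI)
  interpret pair_sigma_finite "PiM I M" "M i"
    by (simp add: assms(1) pair_sigma_finite.intro sigma_finite sigma_finite_measures)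
  fix A assume A: "\<And>j. j \<in> insert i I \<Longrightarrow> A j \<in> sets (M j)"
  have "(\<lambda>(f, y). f(i := y)) -` PiE (insert i I) A \<inter> space (PiM I M \<Otimes>\<^sub>M M i) = PiE I A \<times> A i"
    using A[THEN sets.sets_into_space] assms(2)
    by (auto simp: space_pair_measure space_PiM PiE_def Pi_iff extensional_def split: if_splits)
  then have "emeasure (distr (PiM I M \<Otimes>\<^sub>M M i) (PiM (insert i I) M) (\<lambda>(f, y). f(i := y))) (PiE (insert i I) A)
      = emeasure (PiM I M) (PiE I A) * emeasure (M i) (A i)"
    using A assms by (subst emeasure_distr)
      (auto intro!: sets_PiM_I_finite sigma_finite_measure.emeasure_pair_measure_Times sigma_finite_measures)
  also have "\<dots> = (\<Prod>j\<in>insert i I. emeasure (M j) (A j))"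
    using A assms by (simp add: emeasure_PiM mult.commute)
  finally show "emeasure (distr (PiM I M \<Otimes>\<^sub>M M i) (PiM (insert i I) M) (\<lambda>(f, y). f(i := y))) (PiE (insert i I) A)
      = (\<Prod>j\<in>insert i I. emeasure (M j) (A j))" .
qed (use assms in simp_all)

lemma AE_PiM_insertD:
  assumes "finite I" "i \<notin> I" "AE x in PiM (insert i I) M. Q x"
  shows "AE z in PiM I M. AE y in M i. Q (z(i := y))"
proof -
  interpret pair_sigma_finite "PiM I M" "M i"
    by (simp add: assms(1) pair_sigma_finite.intro sigma_finite sigma_finite_measures)
  have "AE p in PiM I M \<Otimes>\<^sub>M M i. Q ((\<lambda>(f, y). f(i := y)) p)"
    by (rule AE_distrD[OF measurable_add_dim]) (subst distr_add_dim[OF assms(1,2)], rule assms(3))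
  from AE_pair[OF this] show ?thesis by simp
qed

lemma AE_PiM_insertI:
  assumes "finite I" "i \<notin> I"
    and meas: "{x\<in>space (PiM (insert i I) M). Q x} \<in> sets (PiM (insert i I) M)"
    and ae: "AE z in PiM I M. AE y in M i. Q (z(i := y))"
  shows "AE x in PiM (insert i I) M. Q x"
proof -
  interpret pair_sigma_finite "PiM I M" "M i"
    by (simp add: assms(1) pair_sigma_finite.intro sigma_finite sigma_finite_measures)
  have "{p \<in> space (PiM I M \<Otimes>\<^sub>M M i). Q ((\<lambda>(f, y). f(i := y)) p)}
      = (\<lambda>(f, y). f(i := y)) -` {x\<in>space (PiM (insert i I) M). Q x} \<inter> space (PiM I M \<Otimes>\<^sub>M M i)"
    using measurable_space[OF measurable_add_dim, of _ I M i] by auto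
  then have "AE p in PiM I M \<Otimes>\<^sub>M M i. Q ((\<lambda>(f, y). f(i := y)) p)"
    using AE_pair_measure[of "\<lambda>p. Q ((\<lambda>(f, y). f(i := y)) p)"] ae
      measurable_sets[OF measurable_add_dim meas] by (simp add: case_prod_beta)
  then have "AE x in distr (PiM I M \<Otimes>\<^sub>M M i) (PiM (insert i I) M) (\<lambda>(f, y). f(i := y)). Q x"
    by (subst AE_distr_iff[OF measurable_add_dim]) (use meas in auto)
  then show ?thesis by (subst (asm) distr_add_dim[OF assms(1,2)])
qed

lemma AE_PiM_mergeD:
  assumes "I \<inter> J = {}" "finite I" "finite J" "AE x in PiM (I \<union> J) M. Q x"
  shows "AE x in PiM I M. AE y in PiM J M. Q (merge I J (x, y))"
proof -
  interpret pair_sigma_finite "PiM I M" "PiM J M"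
    by (simp add: assms pair_sigma_finite.intro sigma_finite sigma_finite_measures)
  have "AE p in PiM I M \<Otimes>\<^sub>M PiM J M. Q (merge I J p)"
    by (rule AE_distrD[OF measurable_merge]) (subst distr_merge[OF assms(1-3)], rule assms(4))
  from AE_pair[OF this] show ?thesis by simp
qed

lemma AE_PiM_restrictI:
  assumes "I \<subseteq> J" "finite J"
    and meas: "{z\<in>space (PiM I M). Q z} \<in> sets (PiM I M)"
    and ae: "AE z in PiM I M. Q z"
  shows "AE x in PiM J M. Q (restrict x I)"
proof -
  let ?K = "J - I"
  have fin: "finite I" "finite ?K" and disj: "I \<inter> ?K = {}" and J: "I \<union> ?K = J"
    using assms(1,2) finite_subset by auto
  interpret pair_sigma_finite "PiM I M" "PiM ?K M"
    by (simp add: fin pair_sigma_finite.intro sigma_finite sigma_finite_measures)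
  have "{p \<in> space (PiM I M \<Otimes>\<^sub>M PiM ?K M). Q (fst p)} \<in> sets (PiM I M \<Otimes>\<^sub>M PiM ?K M)"
    using meas by measurable
  moreover have "AE x in PiM I M. AE y in PiM ?K M. Q (fst (x, y))"
    using ae by eventually_elim simp
  ultimately have "AE p in PiM I M \<Otimes>\<^sub>M PiM ?K M. Q (fst p)"
    by (rule AE_pair_measure)
  then have "AE p in PiM I M \<Otimes>\<^sub>M PiM ?K M. Q (restrict (merge I ?K p) I)"
    using AE_space by eventually_elim (auto simp: space_pair_measure space_PiM PiE_def extensional_restrict disj)
  moreover have "{x\<in>space (PiM J M). Q (restrict x I)}
      = (\<lambda>x. restrict x I) -` {z\<in>space (PiM I M). Q z} \<inter> space (PiM J M)"
    using measurable_space[OF measurable_restrict_subset[OF assms(1)]] by auto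
  then have "{x\<in>space (PiM J M). Q (restrict x I)} \<in> sets (PiM J M)"
    using measurable_sets[OF measurable_restrict_subset[OF assms(1)] meas] by simp
  ultimately have "AE x in distr (PiM I M \<Otimes>\<^sub>M PiM ?K M) (PiM (I \<union> ?K) M) (merge I ?K). Q (restrict x I)"
    by (subst AE_distr_iff[OF measurable_merge]) (simp_all add: J Un_absorb1[OF assms(1)])
  then show ?thesis by (subst (asm) distr_merge[OF disj fin]) (simp only: J)
qed

lemma AE_PiM_obtain_section:
  assumes "finite A" "a \<in> A" "b \<in> A" "a \<noteq> b" "AE x in PiM A M. P x"
    and S: "S \<in> sets (PiM (A - {a, b}) M)" "emeasure (PiM (A - {a, b}) M) S \<noteq> 0"
  obtains z where "z \<in> S" "AE yb in M b. AE ya in M a. P (z(b := yb, a := ya))"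
proof -
  have A: "insert a (A - {a}) = A" "insert b (A - {a, b}) = A - {a}"
    using assms(2-4) by auto
  have fin: "finite (A - {a})" "a \<notin> A - {a}" "finite (A - {a, b})" "b \<notin> A - {a, b}"
    using assms(1) by auto
  have "AE x in PiM (insert a (A - {a})) M. P x"
    unfolding A(1) by (fact assms(5))
  then have "AE z in PiM (A - {a}) M. AE ya in M a. P (z(a := ya))"
    by (rule AE_PiM_insertD[OF fin(1,2)])
  then have "AE z in PiM (insert b (A - {a, b})) M. AE ya in M a. P (z(a := ya))"
    unfolding A(2) .
  then have "AE z in PiM (A - {a, b}) M. AE yb in M b. AE ya in M a. P (z(b := yb, a := ya))"
    by (rule AE_PiM_insertD[OF fin(3,4)])
  then obtain z where "z \<in> S" "AE yb in M b. AE ya in M a. P (z(b := yb, a := ya))"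
    using S by (rule AE_obtain_in_set)
  then show thesis by (rule that)
qed
end

section \<open>Factorized densities\<close>

definition factor_density ::
    "'n set \<Rightarrow> ('n \<times> 'n) set \<Rightarrow> ('n \<Rightarrow> ('n \<Rightarrow> 'x) \<Rightarrow> 'x \<Rightarrow> real) \<Rightarrow> ('n \<Rightarrow> 'x) \<Rightarrow> real" where
  "factor_density B E k x = (\<Prod>s\<in>B. k s (restrict x (pa E s)) (x s))"

definition prob_density :: "'a measure \<Rightarrow> ('a \<Rightarrow> real) \<Rightarrow> bool" where
  "prob_density M f \<longleftrightarrow>
     f \<in> borel_measurable M \<and> (\<forall>x\<in>space M. 0 \<le> f x) \<and> (\<integral>\<^sup>+ x. ennreal (f x) \<partial>M) = 1"

lemma DAG_model_factor_density:
  "DAG_model N E M = {P. prob_space P \<and> (\<exists>k. (\<forall>s\<in>N. is_kernel M (pa E s) s (k s)) \<and>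
     P = density (PiM N M) (\<lambda>x. ennreal (factor_density N E k x)))}"
  unfolding DAG_model_def factor_density_def ..

lemma is_kernel_prob_density:
  assumes "is_kernel M P s ks" "z \<in> space (PiM P M)"
  shows "prob_density (M s) (ks z)"
proof -
  have "case_prod ks \<in> borel_measurable (PiM P M \<Otimes>\<^sub>M M s)"
    using assms(1) by (simp add: is_kernel_def)
  from measurable_comp[OF measurable_Pair1'[OF assms(2)] this]
  have "ks z \<in> borel_measurable (M s)" by (simp add: comp_def)
  then show ?thesis using assms by (simp add: is_kernel_def prob_density_def)
qed

lemma is_kernel_constI:
  assumes "prob_density (M s) g"
  shows "is_kernel M P s (\<lambda>_. g)"
proof -
  have "g \<circ> snd \<in> borel_measurable (PiM P M \<Otimes>\<^sub>M M s)"
    using assms by (intro measurable_comp[OF measurable_snd]) (simp add: prob_density_def)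
  then show ?thesis
    using assms by (simp add: is_kernel_def prob_density_def comp_def case_prod_beta')
qed

lemma nn_integral_kernel_cmult:
  assumes "is_kernel M P s ks" "z \<in> space (PiM P M)" "0 \<le> c"
  shows "(\<integral>\<^sup>+ y. ennreal (c * ks z y) \<partial>M s) = ennreal c"
proof -
  have ks: "prob_density (M s) (ks z)" using assms(1,2) by (rule is_kernel_prob_density)
  then have "(\<integral>\<^sup>+ y. ennreal (c * ks z y) \<partial>M s) = (\<integral>\<^sup>+ y. ennreal c * ennreal (ks z y) \<partial>M s)"
    using assms(3) by (intro nn_integral_cong) (simp add: prob_density_def ennreal_mult)
  then show ?thesis
    using ks by (simp add: prob_density_def nn_integral_cmult)
qed

lemma measurable_kernel_factor:
  assumes "is_kernel M P s ks" "P \<subseteq> I" "s \<in> I"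
  shows "(\<lambda>x. ks (restrict x P) (x s)) \<in> borel_measurable (PiM I M)"
proof -
  have "case_prod ks \<in> borel_measurable (PiM P M \<Otimes>\<^sub>M M s)"
    using assms(1) by (simp add: is_kernel_def)
  moreover have "(\<lambda>x. (restrict x P, x s)) \<in> measurable (PiM I M) (PiM P M \<Otimes>\<^sub>M M s)"
    using assms(2,3) by (intro measurable_Pair measurable_restrict_subset measurable_component_singleton)
  ultimately show ?thesis
    using measurable_comp by (fastforce simp: comp_def)
qed

lemma kernel_factor_nonneg:
  assumes "is_kernel M P s ks" "P \<subseteq> I" "s \<in> I" "x \<in> space (PiM I M)"
  shows "0 \<le> ks (restrict x P) (x s)"
proof -
  have "restrict x P \<in> space (PiM P M)" "x s \<in> space (M s)"
    using assms(2-4) by (auto simp: space_PiM)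
  then show ?thesis using assms(1) by (simp add: is_kernel_def)
qed

lemma borel_measurable_factor_density:
  assumes "\<forall>s\<in>B. is_kernel M (pa E s) s (k s)" "\<forall>s\<in>B. pa E s \<subseteq> I" "B \<subseteq> I"
  shows "factor_density B E k \<in> borel_measurable (PiM I M)"
  unfolding factor_density_def[abs_def]
  using assms by (intro borel_measurable_prod measurable_kernel_factor) auto

lemma factor_density_nonneg:
  assumes "\<forall>s\<in>B. is_kernel M (pa E s) s (k s)" "\<forall>s\<in>B. pa E s \<subseteq> I" "B \<subseteq> I"
    "x \<in> space (PiM I M)"
  shows "0 \<le> factor_density B E k x"
  unfolding factor_density_def
  using assms by (intro prod_nonneg kernel_factor_nonneg[where I=I and M=M]) auto

lemma factor_density_cong:
  assumes "\<forall>s\<in>B. \<forall>i\<in>insert s (pa E s). x i = y i"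
  shows "factor_density B E k x = factor_density B E k y"
proof -
  have "restrict x (pa E s) = restrict y (pa E s)" "x s = y s" if "s \<in> B" for s
    using assms that by (auto simp: restrict_def)
  then show ?thesis unfolding factor_density_def by (intro prod.cong) auto
qed

lemma factor_density_restrict:
  assumes "\<forall>s\<in>B. insert s (pa E s) \<subseteq> I"
  shows "factor_density B E k (restrict x I) = factor_density B E k x"
  using assms by (intro factor_density_cong) auto

lemma factor_density_kernel_cong:
  assumes "\<forall>s\<in>B. k s = k' s"
  shows "factor_density B E k x = factor_density B E k' x"
  unfolding factor_density_def using assms by (intro prod.cong) auto

lemma factor_density_edges_cong:
  assumes "\<forall>s\<in>B. pa E s = pa E' s"
  shows "factor_density B E k x = factor_density B E' k x"
  unfolding factor_density_def using assms by (intro prod.cong) auto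

lemma factor_density_insert:
  assumes "finite B" "t \<notin> B"
  shows "factor_density (insert t B) E k x = factor_density B E k x * k t (restrict x (pa E t)) (x t)"
  unfolding factor_density_def using assms by (simp add: mult.commute)

lemma factor_density_split:
  assumes "finite B" "A \<subseteq> B"
  shows "factor_density B E k x = factor_density A E k x * factor_density (B - A) E k x"
  unfolding factor_density_def using assms by (simp add: prod.subset_diff mult.commute)

context product_sigma_finite
begin

lemma nn_integral_factor_density_sink:
  assumes "finite B" "t \<notin> B" "\<forall>s\<in>insert t B. is_kernel M (pa E s) s (k s)"
    and "\<forall>s\<in>B. pa E s \<subseteq> B" "pa E t \<subseteq> B" and w: "w \<in> space (PiM B M)"
  shows "(\<integral>\<^sup>+ y. ennreal (factor_density (insert t B) E k (w(t := y))) \<partial>M t)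
    = ennreal (factor_density B E k w)"
proof -
  have "factor_density B E k (w(t := y)) = factor_density B E k w" for y
    using assms(2,4) by (intro factor_density_cong) auto
  moreover have "restrict (w(t := y)) (pa E t) = restrict w (pa E t)" for y
    using assms(2,5) by (auto simp: restrict_def fun_eq_iff)
  ultimately have "factor_density (insert t B) E k (w(t := y))
      = factor_density B E k w * k t (restrict w (pa E t)) y" for y
    using assms(1,2) by (simp add: factor_density_insert)
  moreover have "restrict w (pa E t) \<in> space (PiM (pa E t) M)"
    using w assms(5) by (auto simp: space_PiM)
  moreover have "0 \<le> factor_density B E k w"
    using assms(3,4) w by (intro factor_density_nonneg[where I=B]) auto
  ultimately show ?thesis
    using assms(3) nn_integral_kernel_cmult[of M "pa E t" t "k t" "restrict w (pa E t)"] by simp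
qed

lemma nn_integral_factor_density_marginal:
  assumes "finite D" "finite A" "A \<inter> D = {}" "\<forall>s\<in>A \<union> D. pa E s \<subseteq> A \<union> D" "\<forall>s\<in>A. pa E s \<subseteq> A"
    "acyclic E" "\<forall>s\<in>A \<union> D. is_kernel M (pa E s) s (k s)" "x \<in> space (PiM A M)"
  shows "(\<integral>\<^sup>+ y. ennreal (factor_density (A \<union> D) E k (merge A D (x, y))) \<partial>PiM D M)
    = ennreal (factor_density A E k x)"
  using assms
proof (induction D rule: finite_remove_induct)
  case empty
  have "merge A {} (x, y) = x" for y
    using empty.prems(7) by (auto simp: merge_def space_PiM PiE_def extensional_def)
  then show ?case by (simp add: PiM_empty)
next
  case (remove D)
  obtain t where t: "t \<in> D" "\<forall>u\<in>D. (t, u) \<notin> E"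
    using finite_acyclic_obtain_sink[OF remove.hyps(1,2) remove.prems(5)] by blast
  define D' where "D' = D - {t}"
  have D: "D = insert t D'" "t \<notin> D'" "finite D'" "A \<union> D = insert t (A \<union> D')"
    using t remove.hyps(1) by (auto simp: D'_def)
  have "(t, u) \<notin> E" if "u \<in> A \<union> D" for u
    using t that remove.prems(2,4) by (auto simp: pa_def)
  then have pa': "\<forall>s\<in>A \<union> D'. pa E s \<subseteq> A \<union> D'" "pa E t \<subseteq> A \<union> D'"
    using remove.prems(3) t(1) by (auto simp: D'_def pa_def)
  have fin': "finite (A \<union> D')" and t': "t \<notin> A \<union> D'"
    using remove.prems(1,2) D(2,3) t(1) by auto
  have kern': "\<forall>s\<in>insert t (A \<union> D'). is_kernel M (pa E s) s (k s)"
    using remove.prems(6) by (simp only: D(4))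
  have merge_upd: "merge A D (x, y(t := z)) = (merge A D' (x, y))(t := z)" for y z
    using t(1) remove.prems(2) by (auto simp: D(1) merge_def fun_eq_iff)
  have merge_x: "(\<lambda>y. merge A D (x, y)) \<in> measurable (PiM D M) (PiM (A \<union> D) M)"
    using measurable_comp[OF measurable_Pair1'[OF remove.prems(7)] measurable_merge]
    by (simp add: comp_def)
  have "(\<lambda>y. ennreal (factor_density (A \<union> D) E k (merge A D (x, y))))
      \<in> borel_measurable (PiM (insert t D') M)"
    using measurable_comp[OF merge_x borel_measurable_factor_density[of "A \<union> D" M E k "A \<union> D"]]
      remove.prems(3,6) D(1) by (simp add: comp_def)
  then have "(\<integral>\<^sup>+ y. ennreal (factor_density (A \<union> D) E k (merge A D (x, y))) \<partial>PiM D M)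
      = (\<integral>\<^sup>+ y. \<integral>\<^sup>+ z. ennreal (factor_density (A \<union> D) E k
          (merge A D (x, y(t := z)))) \<partial>M t \<partial>PiM D' M)"
    using product_nn_integral_insert[OF D(3,2)] by (simp add: D(1))
  also have "\<dots> = (\<integral>\<^sup>+ y. \<integral>\<^sup>+ z. ennreal (factor_density (insert t (A \<union> D')) E k
          ((merge A D' (x, y))(t := z))) \<partial>M t \<partial>PiM D' M)"
    by (simp add: merge_upd D(4))
  also have "\<dots> = (\<integral>\<^sup>+ y. ennreal (factor_density (A \<union> D') E k (merge A D' (x, y))) \<partial>PiM D' M)"
  proof (rule nn_integral_cong)
    fix y assume "y \<in> space (PiM D' M)"
    then have "merge A D' (x, y) \<in> space (PiM (A \<union> D') M)"
      using remove.prems(7) by (auto simp: space_PiM PiE_def Pi_iff extensional_def merge_def)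
    then show "(\<integral>\<^sup>+ z. ennreal (factor_density (insert t (A \<union> D')) E k
        ((merge A D' (x, y))(t := z))) \<partial>M t) = ennreal (factor_density (A \<union> D') E k (merge A D' (x, y)))"
      by (rule nn_integral_factor_density_sink[OF fin' t' kern' pa'])
  qed
  also have "\<dots> = ennreal (factor_density A E k x)"
    by (rule remove.IH[OF t(1), folded D'_def]) (use remove.prems pa'(1) kern' in \<open>auto simp: D'_def\<close>)
  finally show ?case .
qed

lemma nn_integral_factor_density:
  assumes "finite B" "\<forall>s\<in>B. pa E s \<subseteq> B" "acyclic E" "\<forall>s\<in>B. is_kernel M (pa E s) s (k s)"
  shows "(\<integral>\<^sup>+ x. ennreal (factor_density B E k x) \<partial>PiM B M) = 1"
proof -
  have "merge {} B (\<lambda>_. undefined, y) = y" if "y \<in> space (PiM B M)" for y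
    using that by (auto simp: merge_def space_PiM PiE_def extensional_def)
  then have "(\<integral>\<^sup>+ x. ennreal (factor_density B E k x) \<partial>PiM B M)
      = (\<integral>\<^sup>+ y. ennreal (factor_density ({} \<union> B) E k (merge {} B (\<lambda>_. undefined, y))) \<partial>PiM B M)"
    by (intro nn_integral_cong) simp
  also have "\<dots> = ennreal (factor_density {} E k (\<lambda>_. undefined))"
    using assms by (intro nn_integral_factor_density_marginal) (auto simp: space_PiM)
  finally show ?thesis by (simp add: factor_density_def)
qed

lemma prob_density_factor_density:
  assumes "finite B" "\<forall>s\<in>B. pa E s \<subseteq> B" "acyclic E" "\<forall>s\<in>B. is_kernel M (pa E s) s (k s)"
  shows "prob_density (PiM B M) (factor_density B E k)"
  using assms borel_measurable_factor_density[of B M E k B] factor_density_nonneg[of B M E k B]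
    nn_integral_factor_density[OF assms] by (simp add: prob_density_def)

lemma prob_space_density:
  assumes "prob_density N f"
  shows "prob_space (density N (\<lambda>x. ennreal (f x)))"
proof (rule prob_spaceI)
  have "emeasure (density N (\<lambda>x. ennreal (f x))) (space N) = (\<integral>\<^sup>+ x. ennreal (f x) \<partial>N)"
    using assms by (subst emeasure_density) (auto simp: prob_density_def intro!: nn_integral_cong)
  then show "emeasure (density N (\<lambda>x. ennreal (f x))) (space (density N (\<lambda>x. ennreal (f x)))) = 1"
    using assms by (simp add: prob_density_def)
qed

lemma factor_density_in_DAG_model:
  assumes "finite N" "\<forall>s\<in>N. pa E s \<subseteq> N" "acyclic E" "\<forall>s\<in>N. is_kernel M (pa E s) s (k s)"
  shows "density (PiM N M) (\<lambda>x. ennreal (factor_density N E k x)) \<in> DAG_model N E M"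
  using assms prob_space_density[OF prob_density_factor_density[OF assms]]
  unfolding DAG_model_factor_density by blast

lemma density_factor_density_eq_iff:
  assumes "finite N" "\<forall>s\<in>N. is_kernel M (pa E s) s (k s)" "\<forall>s\<in>N. pa E s \<subseteq> N"
    "\<forall>s\<in>N. is_kernel M (pa F s) s (q s)" "\<forall>s\<in>N. pa F s \<subseteq> N"
  shows "density (PiM N M) (\<lambda>x. ennreal (factor_density N E k x))
      = density (PiM N M) (\<lambda>x. ennreal (factor_density N F q x))
    \<longleftrightarrow> (AE x in PiM N M. factor_density N E k x = factor_density N F q x)"
proof -
  interpret sigma_finite_measure "PiM N M" by (rule sigma_finite[OF assms(1)])
  have [measurable]: "factor_density N E k \<in> borel_measurable (PiM N M)"
    "factor_density N F q \<in> borel_measurable (PiM N M)"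
    using assms by (auto intro: borel_measurable_factor_density)
  have "(AE x in PiM N M. ennreal (factor_density N E k x) = ennreal (factor_density N F q x))
      \<longleftrightarrow> (AE x in PiM N M. factor_density N E k x = factor_density N F q x)"
    using assms by (intro AE_cong) (auto simp: factor_density_nonneg)
  then show ?thesis by (subst density_unique_iff) auto
qed

lemma AE_factor_density_eq_restrictI:
  assumes "finite I" "B \<subseteq> I"
    "\<forall>s\<in>B. is_kernel M (pa E s) s (k s)" "\<forall>s\<in>B. pa E s \<subseteq> B"
    "\<forall>s\<in>B. is_kernel M (pa F s) s (q s)" "\<forall>s\<in>B. pa F s \<subseteq> B"
    and ae: "AE x in PiM B M. factor_density B E k x = factor_density B F q x"
  shows "AE x in PiM I M. factor_density B E k x = factor_density B F q x"
proof -
  have [measurable]: "factor_density B E k \<in> borel_measurable (PiM B M)"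
    "factor_density B F q \<in> borel_measurable (PiM B M)"
    using assms(3-6) by (auto intro: borel_measurable_factor_density)
  have "AE x in PiM I M. factor_density B E k (restrict x B) = factor_density B F q (restrict x B)"
    using assms(1,2) ae by (intro AE_PiM_restrictI) auto
  moreover have "factor_density B E k (restrict x B) = factor_density B E k x"
    "factor_density B F q (restrict x B) = factor_density B F q x" for x
    using assms(4,6) by (auto intro!: factor_density_restrict)
  ultimately show ?thesis by simp
qed

lemma AE_factor_density_eq_ancestral:
  assumes "finite N" "A \<subseteq> N" "acyclic E" "acyclic F"
    "\<forall>s\<in>N. pa E s \<subseteq> N" "\<forall>s\<in>A. pa E s \<subseteq> A" "\<forall>s\<in>N. pa F s \<subseteq> N" "\<forall>s\<in>A. pa F s \<subseteq> A"
    "\<forall>s\<in>N. is_kernel M (pa E s) s (k s)" "\<forall>s\<in>N. is_kernel M (pa F s) s (q s)"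
    and ae: "AE x in PiM N M. factor_density N E k x = factor_density N F q x"
  shows "AE x in PiM A M. factor_density A E k x = factor_density A F q x"
proof -
  have N: "A \<union> (N - A) = N" using assms(2) by auto
  have "AE x in PiM (A \<union> (N - A)) M. factor_density N E k x = factor_density N F q x"
    by (simp only: N ae)
  then have "AE x in PiM A M. AE y in PiM (N - A) M.
      factor_density N E k (merge A (N - A) (x, y)) = factor_density N F q (merge A (N - A) (x, y))"
    using assms(1,2) by (intro AE_PiM_mergeD) (auto intro: finite_subset)
  then show ?thesis
    using AE_space
  proof eventually_elim
    case (elim x)
    have "AE y in PiM (N - A) M. ennreal (factor_density N E k (merge A (N - A) (x, y)))
        = ennreal (factor_density N F q (merge A (N - A) (x, y)))"
      using elim(1) by eventually_elim simp
    then have "(\<integral>\<^sup>+ y. ennreal (factor_density N E k (merge A (N - A) (x, y))) \<partial>PiM (N - A) M)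
        = (\<integral>\<^sup>+ y. ennreal (factor_density N F q (merge A (N - A) (x, y))) \<partial>PiM (N - A) M)"
      by (rule nn_integral_cong_AE)
    moreover have "finite A" "finite (N - A)" "A \<inter> (N - A) = {}"
      using assms(1,2) finite_subset by auto
    ultimately have "ennreal (factor_density A E k x) = ennreal (factor_density A F q x)"
      using nn_integral_factor_density_marginal[of "N - A" A E k x, unfolded N]
        nn_integral_factor_density_marginal[of "N - A" A F q x, unfolded N]
        assms(3-10) elim(2) by simp
    moreover have "0 \<le> factor_density A E k x" "0 \<le> factor_density A F q x"
      using elim(2) assms(2,6,8-10) by (auto intro!: factor_density_nonneg[where I=A])
    ultimately show ?case by simp
  qed
qed

end

section \<open>Disintegration and the chain rule\<close>

definition marginal_density :: "'x measure \<Rightarrow> 'n \<Rightarrow> (('n \<Rightarrow> 'x) \<Rightarrow> real) \<Rightarrow> ('n \<Rightarrow> 'x) \<Rightarrow> ennreal" where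
  "marginal_density Mw w h z = (\<integral>\<^sup>+ y. ennreal (h (z(w := y))) \<partial>Mw)"

definition conditional_density ::
    "'x measure \<Rightarrow> 'n \<Rightarrow> (('n \<Rightarrow> 'x) \<Rightarrow> real) \<Rightarrow> ('x \<Rightarrow> real) \<Rightarrow> ('n \<Rightarrow> 'x) \<Rightarrow> 'x \<Rightarrow> real" where
  "conditional_density Mw w h g z y =
     (if 0 < marginal_density Mw w h z \<and> marginal_density Mw w h z < \<infinity>
      then h (z(w := y)) / enn2real (marginal_density Mw w h z) else g y)"

context product_sigma_finite
begin

lemma borel_measurable_marginal_density:
  assumes "finite V" "h \<in> borel_measurable (PiM (insert w V) M)"
  shows "marginal_density (M w) w h \<in> borel_measurable (PiM V M)"
proof -
  have "(\<lambda>(z, y). ennreal (h (z(w := y)))) \<in> borel_measurable (PiM V M \<Otimes>\<^sub>M M w)"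
    using measurable_comp[OF measurable_add_dim assms(2)] by (simp add: comp_def case_prod_beta')
  then show ?thesis
    unfolding marginal_density_def[abs_def]
    by (rule sigma_finite_measure.borel_measurable_nn_integral[OF sigma_finite_measures])
qed

lemma nn_integral_marginal_density:
  assumes "finite V" "w \<notin> V" "h \<in> borel_measurable (PiM (insert w V) M)"
  shows "(\<integral>\<^sup>+ z. marginal_density (M w) w h z \<partial>PiM V M) = (\<integral>\<^sup>+ x. ennreal (h x) \<partial>PiM (insert w V) M)"
  unfolding marginal_density_def using assms by (simp add: product_nn_integral_insert)

lemma AE_marginal_density_finite:
  assumes "finite V" "w \<notin> V" "prob_density (PiM (insert w V) M) h"
  shows "AE z in PiM V M. marginal_density (M w) w h z \<noteq> \<infinity>"
  using assms nn_integral_marginal_density[OF assms(1,2)]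
  by (intro nn_integral_PInf_AE borel_measurable_marginal_density) (auto simp: prob_density_def)

lemma prob_density_marginal_density:
  assumes "finite V" "w \<notin> V" "prob_density (PiM (insert w V) M) h"
  shows "prob_density (PiM V M) (\<lambda>z. enn2real (marginal_density (M w) w h z))"
proof -
  have "(\<integral>\<^sup>+ z. ennreal (enn2real (marginal_density (M w) w h z)) \<partial>PiM V M)
      = (\<integral>\<^sup>+ z. marginal_density (M w) w h z \<partial>PiM V M)"
    using AE_marginal_density_finite[OF assms]
    by (intro nn_integral_cong_AE) (auto simp: less_top)
  moreover have "h \<in> borel_measurable (PiM (insert w V) M)"
    using assms(3) by (simp add: prob_density_def)
  then have "marginal_density (M w) w h \<in> borel_measurable (PiM V M)"
    by (rule borel_measurable_marginal_density[OF assms(1)])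
  ultimately show ?thesis
    using assms nn_integral_marginal_density[OF assms(1,2)] by (simp add: prob_density_def)
qed

lemma is_kernel_conditional_density:
  assumes "finite V" "w \<notin> V" and h: "prob_density (PiM (insert w V) M) h"
    and g: "prob_density (M w) g"
  shows "is_kernel M V w (conditional_density (M w) w h g)"
  unfolding is_kernel_def
proof (intro conjI ballI)
  let ?m = "marginal_density (M w) w h"
  have h_upd: "0 \<le> h (z(w := y))" if "z \<in> space (PiM V M)" "y \<in> space (M w)" for z y
    using that assms(2) h by (auto simp: prob_density_def space_PiM PiE_def Pi_iff extensional_def)
  fix z assume z: "z \<in> space (PiM V M)"
  { fix y assume "y \<in> space (M w)"
    then show "0 \<le> conditional_density (M w) w h g z y"
      using g h_upd[OF z] by (simp add: conditional_density_def prob_density_def) }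
  show "(\<integral>\<^sup>+ y. ennreal (conditional_density (M w) w h g z y) \<partial>M w) = 1"
  proof (cases "0 < ?m z \<and> ?m z < \<infinity>")
    case True
    then obtain c where c: "?m z = ennreal c" "0 < c"
      by (cases "?m z") auto
    have "(\<integral>\<^sup>+ y. ennreal (conditional_density (M w) w h g z y) \<partial>M w)
        = (\<integral>\<^sup>+ y. ennreal (h (z(w := y))) * ennreal (1 / c) \<partial>M w)"
    proof (rule nn_integral_cong)
      fix y assume "y \<in> space (M w)"
      then have "0 \<le> h (z(w := y))" by (rule h_upd[OF z])
      moreover have "conditional_density (M w) w h g z y = h (z(w := y)) * (1 / c)"
        using True c by (simp add: conditional_density_def)
      ultimately show "ennreal (conditional_density (M w) w h g z y) = ennreal (h (z(w := y))) * ennreal (1 / c)"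
        using c by (simp add: ennreal_mult del: times_divide_eq_right)
    qed
    also have "\<dots> = ?m z * ennreal (1 / c)"
    proof -
      have "(\<lambda>y. h (z(w := y))) \<in> borel_measurable (M w)"
        using measurable_comp[OF measurable_component_update[OF z assms(2)], of h] h
        by (simp add: prob_density_def comp_def)
      then show ?thesis by (simp add: nn_integral_multc marginal_density_def)
    qed
    also have "\<dots> = 1"
      using c by (simp add: ennreal_mult[symmetric])
    finally show ?thesis .
  next
    case False
    then have "conditional_density (M w) w h g z = g"
      by (intro ext) (simp only: conditional_density_def if_not_P[OF False] if_False)
    then show ?thesis using g by (simp add: prob_density_def)
  qed
next
  have [measurable]: "h \<in> borel_measurable (PiM (insert w V) M)" "g \<in> borel_measurable (M w)"
    using h g by (auto simp: prob_density_def)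
  have [measurable]: "marginal_density (M w) w h \<in> borel_measurable (PiM V M)"
    using assms(1) by (rule borel_measurable_marginal_density) measurable
  show "case_prod (conditional_density (M w) w h g) \<in> borel_measurable (PiM V M \<Otimes>\<^sub>M M w)"
    unfolding conditional_density_def[abs_def] case_prod_beta' by measurable
qed

lemma AE_eq_marginal_times_conditional:
  assumes "finite V" "w \<notin> V" and h: "prob_density (PiM (insert w V) M) h"
    and g: "prob_density (M w) g"
  shows "AE x in PiM (insert w V) M. h x = enn2real (marginal_density (M w) w h (restrict x V))
    * conditional_density (M w) w h g (restrict x V) (x w)"
proof (rule AE_PiM_insertI[OF assms(1,2)])
  let ?m = "marginal_density (M w) w h" and ?c = "conditional_density (M w) w h g"
  have [measurable]: "h \<in> borel_measurable (PiM (insert w V) M)"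
    using h by (simp add: prob_density_def)
  then have [measurable]: "?m \<in> borel_measurable (PiM V M)"
    by (rule borel_measurable_marginal_density[OF assms(1)])
  have [measurable]: "(\<lambda>x. ?c (restrict x V) (x w)) \<in> borel_measurable (PiM (insert w V) M)"
    using is_kernel_conditional_density[OF assms] by (rule measurable_kernel_factor) auto
  show "{x \<in> space (PiM (insert w V) M). h x = enn2real (?m (restrict x V)) * ?c (restrict x V) (x w)}
      \<in> sets (PiM (insert w V) M)"
    by measurable
  show "AE z in PiM V M. AE y in M w. h (z(w := y))
      = enn2real (?m (restrict (z(w := y)) V)) * ?c (restrict (z(w := y)) V) ((z(w := y)) w)"
    using AE_marginal_density_finite[OF assms(1-3)] AE_space
  proof eventually_elim
    case (elim z)
    then have z: "restrict (z(w := y)) V = z" for y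
      using assms(2) by (auto simp: space_PiM PiE_def extensional_def fun_eq_iff)
    show ?case
    proof (cases "?m z = 0")
      case True
      have "(\<lambda>y. h (z(w := y))) \<in> borel_measurable (M w)"
        using measurable_comp[OF measurable_component_update[OF elim(2) assms(2)], of h] by (simp add: comp_def)
      then have ae0: "AE y in M w. ennreal (h (z(w := y))) = 0"
        using True by (simp add: marginal_density_def nn_integral_0_iff_AE)
      have nonneg: "0 \<le> h (z(w := y))" if "y \<in> space (M w)" for y
        using h elim(2) that assms(2) by (auto simp: prob_density_def space_PiM PiE_def Pi_iff extensional_def)
      have "AE y in M w. h (z(w := y)) = 0"
        using ae0 AE_space by eventually_elim (use nonneg in \<open>simp add: order.antisym\<close>)
      then show ?thesis
        by eventually_elim (simp add: z True)
    next
      case False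
      then have "0 < enn2real (?m z)" "0 < ?m z \<and> ?m z < \<infinity>"
        using elim(1) by (auto simp: enn2real_positive_iff less_top zero_less_iff_neq_zero)
      then show ?thesis by (intro AE_I2) (simp add: z conditional_density_def)
    qed
  qed
qed

lemma complete_DAG_factorization:
  assumes "finite V" "\<forall>u\<in>V. pa H u \<subseteq> V" "acyclic H" "complete_set H V"
    "prob_density (PiM V M) h" "\<forall>u\<in>V. prob_density (M u) (g u)"
  shows "\<exists>k. (\<forall>u\<in>V. is_kernel M (pa H u) u (k u)) \<and> (AE x in PiM V M. h x = factor_density V H k x)"
  using assms
proof (induction V arbitrary: h rule: finite_remove_induct)
  case empty
  have "ennreal (h (\<lambda>_. undefined)) = (\<integral>\<^sup>+ x. ennreal (h x) \<partial>PiM {} M)"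
    by (simp add: nn_integral_empty)
  then have "h (\<lambda>_. undefined) = 1"
    using empty.prems(4) by (simp add: prob_density_def)
  then show ?case by (auto intro!: AE_I2 simp: space_PiM_empty factor_density_def)
next
  case (remove V)
  obtain w where w: "w \<in> V" "\<forall>u\<in>V. (w, u) \<notin> H"
    using finite_acyclic_obtain_sink[OF remove.hyps(1,2) remove.prems(2)] by blast
  define V' where "V' = V - {w}"
  have V: "V = insert w V'" "w \<notin> V'" "finite V'"
    using w(1) remove.hyps(1) by (auto simp: V'_def)
  have pa': "\<forall>u\<in>V'. pa H u \<subseteq> V'"
    using remove.prems(1) w by (auto simp: V'_def pa_def)
  have paw: "pa H w = V'"
    using remove.prems(1,3) w by (auto simp: V'_def pa_def complete_set_def joined_def)
  let ?h' = "\<lambda>z. enn2real (marginal_density (M w) w h z)"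
  let ?kw = "conditional_density (M w) w h (g w)"
  have h: "prob_density (PiM (insert w V') M) h" and gw: "prob_density (M w) (g w)"
    using remove.prems(4,5) w(1) by (simp_all add: V(1)[symmetric])
  obtain k' where k': "\<forall>u\<in>V'. is_kernel M (pa H u) u (k' u)"
    and ae': "AE z in PiM V' M. ?h' z = factor_density V' H k' z"
    using remove.IH[OF w(1), folded V'_def, of ?h'] pa' remove.prems(2-5)
      prob_density_marginal_density[OF V(3,2) h] complete_set_subset[of H V V']
    by (auto simp: V'_def)
  define k where "k = k'(w := ?kw)"
  have kern: "\<forall>u\<in>V. is_kernel M (pa H u) u (k u)"
    using k' is_kernel_conditional_density[OF V(3,2) h gw] V(2) by (auto simp: k_def paw V(1))
  have [measurable]: "?h' \<in> borel_measurable (PiM V' M)" "factor_density V' H k' \<in> borel_measurable (PiM V' M)"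
    using prob_density_marginal_density[OF V(3,2) h] k' pa'
    by (auto simp: prob_density_def intro: borel_measurable_factor_density)
  have "AE x in PiM V M. ?h' (restrict x V') = factor_density V' H k' (restrict x V')"
    using V ae' by (intro AE_PiM_restrictI) auto
  moreover have "AE x in PiM V M. h x = ?h' (restrict x V') * ?kw (restrict x V') (x w)"
    by (rule AE_eq_marginal_times_conditional[OF V(3,2) h gw, folded V(1)])
  ultimately have "AE x in PiM V M. h x = factor_density V H k x"
  proof eventually_elim
    case (elim x)
    have "factor_density V' H k x = factor_density V' H k' (restrict x V')"
      using pa' V(2) by (simp add: factor_density_restrict factor_density_kernel_cong k_def)
    then show ?case
      using elim V by (simp add: factor_density_insert k_def paw)
  qed
  then show ?case using kern by blast
qed

end

section \<open>Sufficiency\<close>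

context product_sigma_finite
begin

lemma prob_density_insert_kernel:
  assumes "finite C" "t \<notin> C" "prob_density (PiM C M) f" "is_kernel M C t kt"
  shows "prob_density (PiM (insert t C) M) (\<lambda>v. f (restrict v C) * kt (restrict v C) (v t))"
proof -
  have f[measurable]: "f \<in> borel_measurable (PiM C M)"
    using assms(3) by (simp add: prob_density_def)
  have [measurable]: "(\<lambda>v. kt (restrict v C) (v t)) \<in> borel_measurable (PiM (insert t C) M)"
    using assms(4) by (rule measurable_kernel_factor) auto
  have [measurable]: "(\<lambda>v. f (restrict v C)) \<in> borel_measurable (PiM (insert t C) M)"
    using measurable_comp[OF measurable_restrict_subset[of C "insert t C"] f] by (simp add: comp_def)
  have f_nonneg: "0 \<le> f (restrict v C)" if "v \<in> space (PiM (insert t C) M)" for v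
    using assms(3) measurable_space[OF measurable_restrict_subset[of C "insert t C" M] that]
    by (auto simp: prob_density_def intro!: mult_nonneg_nonneg)
  have "(\<integral>\<^sup>+ v. ennreal (f (restrict v C) * kt (restrict v C) (v t)) \<partial>PiM (insert t C) M)
      = (\<integral>\<^sup>+ z. \<integral>\<^sup>+ y. ennreal (f z * kt z y) \<partial>M t \<partial>PiM C M)"
  proof (subst product_nn_integral_insert[OF assms(1,2)])
    have "restrict (z(t := y)) C = z" if "z \<in> space (PiM C M)" for z y
      using that assms(2) by (auto simp: space_PiM PiE_def extensional_def fun_eq_iff)
    then show "(\<integral>\<^sup>+ z. \<integral>\<^sup>+ y. ennreal (f (restrict (z(t := y)) C) * kt (restrict (z(t := y)) C) ((z(t := y)) t)) \<partial>M t \<partial>PiM C M)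
        = (\<integral>\<^sup>+ z. \<integral>\<^sup>+ y. ennreal (f z * kt z y) \<partial>M t \<partial>PiM C M)"
      by (intro nn_integral_cong) simp
  qed measurable
  also have "\<dots> = (\<integral>\<^sup>+ z. ennreal (f z) \<partial>PiM C M)"
    using assms(3,4) by (intro nn_integral_cong nn_integral_kernel_cmult) (auto simp: prob_density_def)
  finally have "(\<integral>\<^sup>+ v. ennreal (f (restrict v C) * kt (restrict v C) (v t)) \<partial>PiM (insert t C) M) = 1"
    using assms(3) by (simp add: prob_density_def)
  moreover have "(\<lambda>v. f (restrict v C) * kt (restrict v C) (v t)) \<in> borel_measurable (PiM (insert t C) M)"
    by measurable
  ultimately show ?thesis
    using f_nonneg kernel_factor_nonneg[OF assms(4), of "insert t C"]
    by (auto simp: prob_density_def intro!: mult_nonneg_nonneg)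
qed

lemma factorization_parent_closed_clique:
  assumes "finite N" "V \<subseteq> N" "\<forall>u\<in>V. pa H u \<subseteq> V" "acyclic H" "complete_set H V"
    and h: "prob_density (PiM V M) h" and g: "\<forall>u\<in>V. prob_density (M u) (g u)"
    and q: "\<forall>u\<in>N - V. is_kernel M (pa H u) u (q u)"
    and ae: "AE x in PiM N M. f x = h (restrict x V) * factor_density (N - V) H q x"
  shows "\<exists>Q. (\<forall>u\<in>N. is_kernel M (pa H u) u (Q u)) \<and> (AE x in PiM N M. f x = factor_density N H Q x)"
proof -
  have "finite V" using assms(1,2) by (rule finite_subset[rotated])
  then obtain k where k: "\<forall>u\<in>V. is_kernel M (pa H u) u (k u)"
    and ae_V: "AE z in PiM V M. h z = factor_density V H k z"
    using complete_DAG_factorization[OF _ assms(3-5) h g] by blast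
  define Q where "Q u = (if u \<in> V then k u else q u)" for u
  have [measurable]: "h \<in> borel_measurable (PiM V M)" "factor_density V H k \<in> borel_measurable (PiM V M)"
    using h k assms(3) by (auto simp: prob_density_def intro: borel_measurable_factor_density)
  have "AE x in PiM N M. h (restrict x V) = factor_density V H k (restrict x V)"
    using assms(1,2) ae_V by (intro AE_PiM_restrictI) auto
  with ae have "AE x in PiM N M. f x = factor_density N H Q x"
  proof eventually_elim
    case (elim x)
    have "factor_density V H k (restrict x V) = factor_density V H Q x"
      using assms(3) by (simp add: factor_density_restrict factor_density_kernel_cong Q_def)
    moreover have "factor_density (N - V) H q x = factor_density (N - V) H Q x"
      by (simp add: factor_density_kernel_cong Q_def)
    ultimately show ?case
      using elim by (simp add: factor_density_split[OF assms(1,2), of H Q x])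
  qed
  moreover have "\<forall>u\<in>N. is_kernel M (pa H u) u (Q u)"
    using k q by (simp add: Q_def)
  ultimately show ?thesis by blast
qed

lemma reverse_factorization_remove_sink:
  assumes "finite N" and EN: "E \<subseteq> N \<times> N" and "acyclic E"
    and compl: "\<forall>s\<in>N. complete_set E (pa E s) \<and> complete_set E (ch E s)"
    and g: "\<forall>u\<in>N. prob_density (M u) (g u)" and k: "\<forall>s\<in>N. is_kernel M (pa E s) s (k s)"
    and t: "t \<in> N" "\<forall>u. (t, u) \<notin> E"
  defines "E' \<equiv> E \<inter> (N - {t}) \<times> (N - {t})"
  assumes q: "\<forall>s\<in>N - {t}. is_kernel M (ch E' s) s (q s)"
    and ae: "AE x in PiM N M. factor_density (N - {t}) E k x = factor_density (N - {t}) (reverse_edges E') q x"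
  shows "\<exists>Q. (\<forall>s\<in>N. is_kernel M (ch E s) s (Q s))
    \<and> (AE x in PiM N M. factor_density N E k x = factor_density N (reverse_edges E) Q x)"
proof -
  define R' where "R' = reverse_edges E'"
  define C where "C = pa E t"
  define V where "V = insert t C"
  have C: "C \<subseteq> N - {t}"
    using EN t by (auto simp: C_def pa_def)
  have "finite C"
    using finite_subset[OF C finite_Diff[OF assms(1)]] .
  have V: "V \<subseteq> N" using C t(1) by (auto simp: V_def)
  have clique: "complete_set E V" "\<forall>c\<in>V. ch E c \<subseteq> V" "\<forall>c\<in>C. pa R' c \<subseteq> C"
    "\<forall>u\<in>N - V. pa R' u = pa (reverse_edges E) u"
    using sink_parents_clique[OF compl EN t] by (simp_all add: V_def C_def R'_def E'_def)
  have q': "\<forall>s\<in>N - {t}. is_kernel M (pa R' s) s (q s)"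
    using q by (simp add: R'_def)
  define h where "h v = factor_density C R' q (restrict v C) * k t (restrict v C) (v t)" for v
  have "acyclic R'" using \<open>acyclic E\<close> by (simp add: R'_def E'_def acyclic_subset)
  then have h: "prob_density (PiM V M) h"
    unfolding h_def[abs_def] V_def using C \<open>finite C\<close> q' k t clique(3)
    by (intro prob_density_insert_kernel prob_density_factor_density) (auto simp: C_def)
  have split: "AE x in PiM N M.
      factor_density N E k x = h (restrict x V) * factor_density (N - V) (reverse_edges E) q x"
    using ae
  proof eventually_elim
    case (elim x)
    have "factor_density N E k x = factor_density (N - {t}) E k x * k t (restrict x C) (x t)"
      using factor_density_insert[of "N - {t}" t E k x] assms(1) t(1) by (simp add: insert_absorb C_def)
    moreover have "N - V = N - {t} - C" by (auto simp: V_def)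
    then have "factor_density (N - {t}) R' q x = factor_density C R' q x * factor_density (N - V) R' q x"
      using factor_density_split[OF _ C, of R' q x] assms(1) by simp
    moreover have "factor_density (N - V) R' q x = factor_density (N - V) (reverse_edges E) q x"
      using clique(4) by (simp add: factor_density_edges_cong)
    moreover have "factor_density C R' q (restrict x C) = factor_density C R' q x"
      using clique(3) by (intro factor_density_restrict) auto
    ultimately show ?case
      using elim by (simp add: h_def V_def R'_def Int_absorb1[OF subset_insertI])
  qed
  have "\<forall>u\<in>N - V. is_kernel M (pa (reverse_edges E) u) u (q u)"
  proof
    fix u assume u: "u \<in> N - V"
    then have "u \<in> N - {t}" by (auto simp: V_def)
    then show "is_kernel M (pa (reverse_edges E) u) u (q u)"
      using bspec[OF q' \<open>u \<in> N - {t}\<close>] bspec[OF clique(4) u] by simp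
  qed
  moreover have "acyclic (reverse_edges E)" "complete_set (reverse_edges E) V" "\<forall>u\<in>V. prob_density (M u) (g u)"
    using assms(3) clique(1) g V by auto
  ultimately show ?thesis
    using factorization_parent_closed_clique[OF assms(1) V _ _ _ h _ _ split] clique(2) by simp
qed

lemma reverse_factorization:
  assumes "finite N" "E \<subseteq> N \<times> N" "acyclic E"
    "\<forall>s\<in>N. complete_set E (pa E s) \<and> complete_set E (ch E s)"
    "\<forall>u\<in>N. prob_density (M u) (g u)" "\<forall>s\<in>N. is_kernel M (pa E s) s (k s)"
  shows "\<exists>q. (\<forall>s\<in>N. is_kernel M (ch E s) s (q s))
    \<and> (AE x in PiM N M. factor_density N E k x = factor_density N (reverse_edges E) q x)"
  using assms
proof (induction N arbitrary: E rule: finite_remove_induct)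
  case empty
  then show ?case by (auto simp: factor_density_def)
next
  case (remove N)
  obtain t where t: "t \<in> N" "\<forall>u\<in>N. (t, u) \<notin> E"
    using finite_acyclic_obtain_sink[OF remove.hyps(1,2) remove.prems(2)] by blast
  then have sink: "\<forall>u. (t, u) \<notin> E" using remove.prems(1) by auto
  define E' where "E' = E \<inter> (N - {t}) \<times> (N - {t})"
  have E': "E' \<subseteq> (N - {t}) \<times> (N - {t})" "acyclic E'"
    "\<forall>s\<in>N - {t}. pa E' s \<subseteq> N - {t}" "\<forall>s\<in>N - {t}. pa (reverse_edges E') s \<subseteq> N - {t}"
    using acyclic_subset[OF remove.prems(2)] by (auto simp: E'_def pa_def reverse_edges_def)
  have pa_E': "\<forall>s\<in>N - {t}. pa E' s = pa E s"
    using sink remove.prems(1) by (auto simp: E'_def pa_def)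
  have k': "\<forall>s\<in>N - {t}. is_kernel M (pa E' s) s (k s)"
    using pa_E' remove.prems(5) by simp
  have "\<forall>s\<in>N - {t}. complete_set E' (pa E' s) \<and> complete_set E' (ch E' s)"
    unfolding E'_def using remove.prems(3) by (rule complete_families_induced) auto
  then obtain q where q: "\<forall>s\<in>N - {t}. is_kernel M (ch E' s) s (q s)"
    and "AE x in PiM (N - {t}) M. factor_density (N - {t}) E' k x = factor_density (N - {t}) (reverse_edges E') q x"
    using remove.IH[OF t(1) E'(1,2)] remove.prems(4) k' by auto
  then have "AE x in PiM N M. factor_density (N - {t}) E' k x = factor_density (N - {t}) (reverse_edges E') q x"
    using AE_factor_density_eq_restrictI[OF remove.hyps(1) _ k' E'(3) _ E'(4)] by auto
  moreover have "factor_density (N - {t}) E' k x = factor_density (N - {t}) E k x" for x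
    using pa_E' by (intro factor_density_edges_cong)
  ultimately show ?case
    using reverse_factorization_remove_sink[OF remove.hyps(1) remove.prems(1-5) t(1) sink] q
    by (simp add: E'_def)
qed

lemma DAG_model_subset_reverse:
  assumes "finite N" "E \<subseteq> N \<times> N" "acyclic E"
    "\<forall>s\<in>N. complete_set E (pa E s) \<and> complete_set E (ch E s)" "\<forall>u\<in>N. prob_density (M u) (g u)"
  shows "DAG_model N E M \<subseteq> DAG_model N (reverse_edges E) M"
proof
  fix P assume "P \<in> DAG_model N E M"
  then obtain k where P: "prob_space P" "P = density (PiM N M) (\<lambda>x. ennreal (factor_density N E k x))"
    and k: "\<forall>s\<in>N. is_kernel M (pa E s) s (k s)"
    unfolding DAG_model_factor_density by blast
  obtain q where q: "\<forall>s\<in>N. is_kernel M (ch E s) s (q s)"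
    and ae: "AE x in PiM N M. factor_density N E k x = factor_density N (reverse_edges E) q x"
    using reverse_factorization[OF assms k] by blast
  have "density (PiM N M) (\<lambda>x. ennreal (factor_density N E k x))
      = density (PiM N M) (\<lambda>x. ennreal (factor_density N (reverse_edges E) q x))"
    using ae k q assms(1,2) by (subst density_factor_density_eq_iff) (auto simp: pa_subset ch_def)
  then show "P \<in> DAG_model N (reverse_edges E) M"
    using P q unfolding DAG_model_factor_density by auto
qed

end

section \<open>Necessity\<close>

definition disjoint_unit_sets :: "'a measure \<Rightarrow> 'a set \<Rightarrow> 'a set \<Rightarrow> bool" where
  "disjoint_unit_sets M U0 U1 \<longleftrightarrow>
     U0 \<in> sets M \<and> U1 \<in> sets M \<and> U0 \<inter> U1 = {} \<and> emeasure M U0 = 1 \<and> emeasure M U1 = 1"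

definition coin :: "'a set \<Rightarrow> 'a set \<Rightarrow> 'a \<Rightarrow> real" where
  "coin U0 U1 y = (indicator U0 y + indicator U1 y) / 2"

definition xor_kernel ::
    "('n \<Rightarrow> 'x set) \<Rightarrow> ('n \<Rightarrow> 'x set) \<Rightarrow> 'n \<Rightarrow> 'n \<Rightarrow> 'n \<Rightarrow> ('n \<Rightarrow> 'x) \<Rightarrow> 'x \<Rightarrow> real" where
  "xor_kernel U0 U1 a b s z = indicator (if (z a \<in> U1 a) \<noteq> (z b \<in> U1 b) then U1 s else U0 s)"

definition v_structure_kernels ::
    "('n \<Rightarrow> 'x set) \<Rightarrow> ('n \<Rightarrow> 'x set) \<Rightarrow> 'n \<Rightarrow> 'n \<Rightarrow> 'n \<Rightarrow> 'n \<Rightarrow> ('n \<Rightarrow> 'x) \<Rightarrow> 'x \<Rightarrow> real" where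
  "v_structure_kernels U0 U1 a b s u = (if u = s then xor_kernel U0 U1 a b s else (\<lambda>_. coin (U0 u) (U1 u)))"

lemma prob_density_coin:
  assumes "disjoint_unit_sets M U0 U1"
  shows "prob_density M (coin U0 U1)"
proof -
  have [measurable]: "U0 \<in> sets M" "U1 \<in> sets M"
    using assms by (auto simp: disjoint_unit_sets_def)
  have "(\<integral>\<^sup>+ y. ennreal (coin U0 U1 y) \<partial>M)
      = (\<integral>\<^sup>+ y. ennreal (1/2) * indicator U0 y + ennreal (1/2) * indicator U1 y \<partial>M)"
    using assms by (intro nn_integral_cong) (auto simp: coin_def indicator_def disjoint_unit_sets_def)
  also have "\<dots> = ennreal (1/2) * emeasure M U0 + ennreal (1/2) * emeasure M U1"
    by (subst nn_integral_add) (auto simp: nn_integral_cmult_indicator)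
  also have "\<dots> = 1"
    using assms ennreal_plus[of "1/2" "1/2"] by (simp add: disjoint_unit_sets_def)
  finally show ?thesis
    unfolding prob_density_def coin_def[abs_def] by auto
qed

lemma is_kernel_xor_kernel:
  assumes "a \<in> P" "b \<in> P" and U: "disjoint_unit_sets (M a) (U0 a) (U1 a)"
    "disjoint_unit_sets (M b) (U0 b) (U1 b)" "disjoint_unit_sets (M s) (U0 s) (U1 s)"
  shows "is_kernel M P s (xor_kernel U0 U1 a b s)"
  unfolding is_kernel_def
proof (intro conjI ballI)
  have [measurable]: "U1 a \<in> sets (M a)" "U1 b \<in> sets (M b)" "U0 s \<in> sets (M s)" "U1 s \<in> sets (M s)"
    using U by (auto simp: disjoint_unit_sets_def)
  have [measurable]: "(\<lambda>p. fst p a) \<in> measurable (PiM P M \<Otimes>\<^sub>M M s) (M a)"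
    "(\<lambda>p. fst p b) \<in> measurable (PiM P M \<Otimes>\<^sub>M M s) (M b)"
    using assms(1,2) by (auto intro: measurable_compose[OF measurable_fst measurable_component_singleton])
  have "(\<lambda>p. if (fst p a \<in> U1 a) \<noteq> (fst p b \<in> U1 b) then indicator (U1 s) (snd p) else indicator (U0 s) (snd p))
      \<in> borel_measurable (PiM P M \<Otimes>\<^sub>M M s)"
    by measurable
  moreover have "case_prod (xor_kernel U0 U1 a b s)
      = (\<lambda>p. if (fst p a \<in> U1 a) \<noteq> (fst p b \<in> U1 b) then indicator (U1 s) (snd p) else indicator (U0 s) (snd p))"
    by (auto simp: xor_kernel_def fun_eq_iff)
  ultimately show "case_prod (xor_kernel U0 U1 a b s) \<in> borel_measurable (PiM P M \<Otimes>\<^sub>M M s)"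
    by simp
  fix z
  show "(\<integral>\<^sup>+ y. ennreal (xor_kernel U0 U1 a b s z y) \<partial>M s) = 1"
    using U(3) by (simp add: xor_kernel_def disjoint_unit_sets_def ennreal_indicator)
qed (simp add: xor_kernel_def)

lemma is_kernel_v_structure_kernels:
  assumes "u = s \<longrightarrow> a \<in> P \<and> b \<in> P" and U: "\<forall>v\<in>{a, b, s, u}. disjoint_unit_sets (M v) (U0 v) (U1 v)"
  shows "is_kernel M P u (v_structure_kernels U0 U1 a b s u)"
  using assms is_kernel_xor_kernel[of a P b M U0 U1 s] is_kernel_constI[OF prob_density_coin, of M u "U0 u" "U1 u" P]
  by (cases "u = s") (auto simp: v_structure_kernels_def)

lemma factor_density_v_structure_kernels:
  assumes "finite A" "s \<in> A" "a \<noteq> s" "b \<noteq> s" "a \<in> pa E s" "b \<in> pa E s"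
  shows "factor_density A E (v_structure_kernels U0 U1 a b s) x
    = xor_kernel U0 U1 a b s x (x s) * (\<Prod>u\<in>A - {s}. coin (U0 u) (U1 u) (x u))"
proof -
  have "xor_kernel U0 U1 a b s (restrict x (pa E s)) = xor_kernel U0 U1 a b s x"
    using assms(5,6) by (simp add: xor_kernel_def fun_eq_iff)
  then show ?thesis
    unfolding factor_density_def using assms(1,2)
    by (simp add: prod.remove v_structure_kernels_def)
qed

lemma factor_density_v_structure_value:
  assumes "finite A" "s \<in> A" "a \<noteq> s" "b \<noteq> s" "a \<in> pa E s" "b \<in> pa E s"
    and U: "\<forall>u\<in>A. U0 u \<inter> U1 u = {}" and x: "\<forall>u\<in>A. x u \<in> U0 u \<union> U1 u" "x s \<in> U0 s"
  shows "factor_density A E (v_structure_kernels U0 U1 a b s) x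
    = (if (x a \<in> U1 a) = (x b \<in> U1 b) then (1/2) ^ (card A - 1) else 0)"
proof -
  have "coin (U0 u) (U1 u) (x u) = 1/2" if "u \<in> A" for u
    using U x(1) that by (auto simp: coin_def indicator_def)
  then have "(\<Prod>u\<in>A - {s}. coin (U0 u) (U1 u) (x u)) = (\<Prod>u\<in>A - {s}. 1/2)"
    by (intro prod.cong) auto
  also have "\<dots> = (1/2) ^ (card A - 1)"
    using assms(1,2) by simp
  finally have "(\<Prod>u\<in>A - {s}. coin (U0 u) (U1 u) (x u)) = (1/2) ^ (card A - 1)" .
  moreover have "x s \<notin> U1 s" using U x(2) assms(2) by auto
  ultimately show ?thesis
    using x(2) by (simp add: factor_density_v_structure_kernels[OF assms(1-6)] xor_kernel_def)
qed

lemma not_AE_product_eq_xor: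
  fixes F :: "'a \<Rightarrow> real" and G :: "'b \<Rightarrow> real"
  assumes A: "A0 \<in> sets Ma" "A1 \<in> sets Ma" "A0 \<inter> A1 = {}" "emeasure Ma A0 \<noteq> 0" "emeasure Ma A1 \<noteq> 0"
    and B: "B0 \<in> sets Mb" "B1 \<in> sets Mb" "B0 \<inter> B1 = {}" "emeasure Mb B0 \<noteq> 0" "emeasure Mb B1 \<noteq> 0"
    and "c \<noteq> 0"
  shows "\<not> (AE yb in Mb. AE ya in Ma. ya \<in> A0 \<union> A1 \<longrightarrow> yb \<in> B0 \<union> B1 \<longrightarrow>
    F ya * G yb = (if (ya \<in> A1) = (yb \<in> B1) then c else 0))" (is "\<not> (AE yb in Mb. AE ya in Ma. ?\<phi> ya yb)")
proof
  assume ae: "AE yb in Mb. AE ya in Ma. ?\<phi> ya yb"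
  obtain yb0 where yb0: "yb0 \<in> B0" "AE ya in Ma. ?\<phi> ya yb0"
    using AE_obtain_in_set[OF ae B(1,4)] by blast
  obtain yb1 where yb1: "yb1 \<in> B1" "AE ya in Ma. ?\<phi> ya yb1"
    using AE_obtain_in_set[OF ae B(2,5)] by blast
  obtain ya0 where ya0: "ya0 \<in> A0" "?\<phi> ya0 yb0"
    using AE_obtain_in_set[OF yb0(2) A(1,4)] by blast
  have "AE ya in Ma. ?\<phi> ya yb0 \<and> ?\<phi> ya yb1"
    using yb0(2) yb1(2) by eventually_elim simp
  then obtain ya1 where ya1: "ya1 \<in> A1" "?\<phi> ya1 yb0" "?\<phi> ya1 yb1"
    using AE_obtain_in_set[OF _ A(2,5)] by blast
  have "F ya0 * G yb0 = c" "F ya1 * G yb0 = 0" "F ya1 * G yb1 = c"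
    using ya0 ya1 yb0(1) yb1(1) A(3) B(3) by auto
  then show False using \<open>c \<noteq> 0\<close> by auto
qed

lemma factor_density_sink_update:
  assumes "finite A" "b \<in> A" "\<forall>u\<in>A. b \<notin> pa H u" "a \<notin> pa H b" "a \<noteq> b"
  shows "factor_density A H q (z(b := yb, a := ya))
    = factor_density (A - {b}) H q (z(a := ya)) * q b (restrict z (pa H b)) yb"
proof -
  have "factor_density (A - {b}) H q (z(b := yb, a := ya)) = factor_density (A - {b}) H q (z(a := ya))"
    using assms(2,3) by (intro factor_density_cong) auto
  moreover have "restrict (z(b := yb, a := ya)) (pa H b) = restrict z (pa H b)"
    using assms(2-4) by (auto simp: restrict_def fun_eq_iff)
  ultimately show ?thesis
    using factor_density_insert[of "A - {b}" b H q "z(b := yb, a := ya)"] assms(1,2,5)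
    by (simp add: insert_absorb)
qed

context product_sigma_finite
begin

lemma not_AE_v_structure_eq_factor_density:
  assumes "finite A" "a \<in> A" "b \<in> A" "s \<in> A" "a \<noteq> b" "a \<noteq> s" "b \<noteq> s"
    and U: "\<forall>u\<in>A. disjoint_unit_sets (M u) (U0 u) (U1 u)"
    and H: "\<forall>u\<in>A. b \<notin> pa H u" "a \<notin> pa H b"
  shows "\<not> (AE x in PiM A M. factor_density A {(a, s), (b, s)} (v_structure_kernels U0 U1 a b s) x
    = factor_density A H q x)"
proof
  let ?k = "v_structure_kernels U0 U1 a b s" and ?E0 = "{(a, s), (b, s)}"
  assume ae: "AE x in PiM A M. factor_density A ?E0 ?k x = factor_density A H q x"
  have U0: "\<forall>u\<in>A - {a, b}. U0 u \<in> sets (M u) \<and> emeasure (M u) (U0 u) = 1"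
    using U by (simp add: disjoint_unit_sets_def)
  then have "emeasure (PiM (A - {a, b}) M) (PiE (A - {a, b}) U0) = (\<Prod>u\<in>A - {a, b}. emeasure (M u) (U0 u))"
    using assms(1) by (intro emeasure_PiM) auto
  also have "\<dots> = 1" using U0 by simp
  finally have "emeasure (PiM (A - {a, b}) M) (PiE (A - {a, b}) U0) \<noteq> 0" by simp
  moreover have "PiE (A - {a, b}) U0 \<in> sets (PiM (A - {a, b}) M)"
    using U0 assms(1) by (intro sets_PiM_I_finite) auto
  ultimately obtain z where z: "z \<in> PiE (A - {a, b}) U0" and ae_z: "AE yb in M b. AE ya in M a.
      factor_density A ?E0 ?k (z(b := yb, a := ya)) = factor_density A H q (z(b := yb, a := ya))"
    using AE_PiM_obtain_section[OF assms(1-3,5) ae] by auto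
  define c :: real where "c = (1/2) ^ (card A - 1)"
  have key: "factor_density (A - {b}) H q (z(a := ya)) * q b (restrict z (pa H b)) yb
      = (if (ya \<in> U1 a) = (yb \<in> U1 b) then c else 0)"
    if "ya \<in> U0 a \<union> U1 a" "yb \<in> U0 b \<union> U1 b"
      and eq: "factor_density A ?E0 ?k (z(b := yb, a := ya)) = factor_density A H q (z(b := yb, a := ya))"
    for ya yb
  proof -
    have "factor_density A ?E0 ?k (z(b := yb, a := ya)) = (if (ya \<in> U1 a) = (yb \<in> U1 b) then c else 0)"
      using assms(1-7) that(1,2) z U
      by (subst factor_density_v_structure_value) (auto simp: c_def disjoint_unit_sets_def PiE_iff pa_def)
    moreover have "factor_density A H q (z(b := yb, a := ya))
        = factor_density (A - {b}) H q (z(a := ya)) * q b (restrict z (pa H b)) yb"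
      using assms(1,3,5) H by (intro factor_density_sink_update)
    ultimately show ?thesis using eq by simp
  qed
  have "AE yb in M b. AE ya in M a. ya \<in> U0 a \<union> U1 a \<longrightarrow> yb \<in> U0 b \<union> U1 b \<longrightarrow>
      factor_density (A - {b}) H q (z(a := ya)) * q b (restrict z (pa H b)) yb
        = (if (ya \<in> U1 a) = (yb \<in> U1 b) then c else 0)"
    using ae_z
  proof eventually_elim
    case (elim yb)
    then show ?case by eventually_elim (use key in blast)
  qed
  moreover have "c \<noteq> 0" by (simp add: c_def)
  ultimately show False
    using not_AE_product_eq_xor[of "U0 a" "M a" "U1 a" "U0 b" "M b" "U1 b" c] U assms(2,3)
    by (auto simp: disjoint_unit_sets_def)
qed

text \<open>The \<open>G\<^sup>*\<close>-ancestral set of \<open>a\<close> and \<open>b\<close> consists of their \<open>G\<close>-descendants; in it,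
  \<open>b\<close> has no \<open>G\<^sup>*\<close>-children.\<close>
lemma v_structure_not_in_reverse_DAG_model:
  assumes "finite N" and EN: "E \<subseteq> N \<times> N" and "acyclic E"
    and U: "\<forall>u\<in>N. disjoint_unit_sets (M u) (U0 u) (U1 u)"
    and as: "(a, s) \<in> E" and bs: "(b, s) \<in> E" and "a \<noteq> b" and "\<not> joined E a b" and "(a, b) \<notin> E\<^sup>+"
  shows "density (PiM N M) (\<lambda>x. ennreal (factor_density N E (v_structure_kernels U0 U1 a b s) x))
    \<notin> DAG_model N (reverse_edges E) M"
proof
  let ?k = "v_structure_kernels U0 U1 a b s" and ?R = "reverse_edges E" and ?E0 = "{(a, s), (b, s)}"
  assume "density (PiM N M) (\<lambda>x. ennreal (factor_density N E ?k x)) \<in> DAG_model N ?R M"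
  then obtain q where q: "\<forall>u\<in>N. is_kernel M (ch E u) u (q u)"
    and eq: "density (PiM N M) (\<lambda>x. ennreal (factor_density N E ?k x))
      = density (PiM N M) (\<lambda>x. ennreal (factor_density N ?R q x))"
    unfolding DAG_model_factor_density by auto
  have nodes: "a \<in> N" "b \<in> N" "s \<in> N" "a \<noteq> s" "b \<noteq> s"
    using as bs EN \<open>acyclic E\<close> by (auto simp: acyclic_def)
  have ab_pa: "a \<in> pa E s" "b \<in> pa E s" "a \<in> pa ?E0 s" "b \<in> pa ?E0 s"
    using as bs by (auto simp: pa_def)
  have "\<forall>v\<in>{a, b, s, u}. disjoint_unit_sets (M v) (U0 v) (U1 v)" if "u \<in> N" for u
    using U nodes that by auto
  then have k: "\<forall>u\<in>N. is_kernel M (pa E u) u (?k u)" "\<forall>u\<in>N. is_kernel M (pa ?E0 u) u (?k u)"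
    using ab_pa by (auto intro!: is_kernel_v_structure_kernels)
  have "AE x in PiM N M. factor_density N E ?k x = factor_density N ?R q x"
    using eq k(1) q assms(1) EN by (subst (asm) density_factor_density_eq_iff) (auto simp: pa_subset ch_def)
  moreover have "factor_density N E ?k x = factor_density N ?E0 ?k x" for x
    using ab_pa nodes assms(1) by (simp add: factor_density_v_structure_kernels)
  ultimately have ae_N: "AE x in PiM N M. factor_density N ?E0 ?k x = factor_density N ?R q x"
    by simp
  define A where "A = {u. (a, u) \<in> E\<^sup>* \<or> (b, u) \<in> E\<^sup>*}"
  have "u \<in> N" if "(v, u) \<in> E\<^sup>*" "v \<in> N" for u v
    using that EN by (induction rule: rtrancl_induct) auto
  then have A: "A \<subseteq> N" "a \<in> A" "b \<in> A" "s \<in> A"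
    using nodes as by (auto simp: A_def)
  have A_closed: "\<forall>u\<in>A. ch E u \<subseteq> A"
    unfolding A_def ch_def by (blast intro: rtrancl_into_rtrancl)
  have "acyclic ?E0" using as bs by (intro acyclic_subset[OF \<open>acyclic E\<close>]) auto
  moreover have "\<forall>u\<in>N. pa ?E0 u \<subseteq> N" "\<forall>u\<in>A. pa ?E0 u \<subseteq> A"
    using nodes A by (auto simp: pa_def)
  moreover have "\<forall>u\<in>N. pa ?R u \<subseteq> N" using EN by (auto simp: ch_def)
  ultimately have "AE x in PiM A M. factor_density A ?E0 ?k x = factor_density A ?R q x"
    using AE_factor_density_eq_ancestral[OF assms(1) A(1) _ _ _ _ _ _ k(2) _ ae_N] A_closed q \<open>acyclic E\<close>
    by simp
  moreover have "\<forall>u\<in>A. b \<notin> pa ?R u"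
    using descendant_not_parent[OF \<open>acyclic E\<close> \<open>(a, b) \<notin> E\<^sup>+\<close>] by (auto simp: A_def ch_def)
  moreover have "a \<notin> pa ?R b"
    using \<open>\<not> joined E a b\<close> by (simp add: joined_def ch_def)
  ultimately show False
    using not_AE_v_structure_eq_factor_density[of A a b s U0 U1 ?R q] finite_subset[OF A(1) assms(1)]
      A nodes U \<open>a \<noteq> b\<close> by auto
qed

end

lemma prob_density_indicator:
  assumes "A \<in> sets M" "emeasure M A = 1"
  shows "prob_density M (indicator A)"
  using assms by (simp add: prob_density_def ennreal_indicator)

context product_sigma_finite
begin

lemma DAG_model_ne_reverse:
  assumes "finite N" "E \<subseteq> N \<times> N" "acyclic E" "\<forall>u\<in>N. disjoint_unit_sets (M u) (U0 u) (U1 u)"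
    and "s \<in> N" "\<not> complete_set E (pa E s)"
  shows "DAG_model N E M \<noteq> DAG_model N (reverse_edges E) M"
proof -
  obtain a b where ab: "(a, s) \<in> E" "(b, s) \<in> E" "a \<noteq> b" "\<not> joined E a b"
    using assms(6) by (auto simp: complete_set_def pa_def)
  have "\<not> ((a, b) \<in> E\<^sup>+ \<and> (b, a) \<in> E\<^sup>+)"
    using assms(3) by (auto simp: acyclic_def dest: trancl_trans)
  then obtain a b where ab: "(a, s) \<in> E" "(b, s) \<in> E" "a \<noteq> b" "\<not> joined E a b" "(a, b) \<notin> E\<^sup>+"
    using ab by (metis joined_def)
  let ?P = "density (PiM N M) (\<lambda>x. ennreal (factor_density N E (v_structure_kernels U0 U1 a b s) x))"
  have "a \<in> N" "b \<in> N" using ab(1,2) assms(2) by auto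
  then have "\<forall>u\<in>N. is_kernel M (pa E u) u (v_structure_kernels U0 U1 a b s u)"
    using ab(1,2) assms(4,5) by (auto intro!: is_kernel_v_structure_kernels simp: pa_def)
  then have "?P \<in> DAG_model N E M"
    using assms(1-3) by (intro factor_density_in_DAG_model) (auto simp: pa_subset)
  moreover have "?P \<notin> DAG_model N (reverse_edges E) M"
    using assms(1-4) ab by (rule v_structure_not_in_reverse_DAG_model)
  ultimately show ?thesis by blast
qed

lemma DAG_model_eq_reverse_iff:
  assumes "finite N" "E \<subseteq> N \<times> N" "acyclic E" "\<forall>u\<in>N. disjoint_unit_sets (M u) (U0 u) (U1 u)"
  shows "DAG_model N E M = DAG_model N (reverse_edges E) M
    \<longleftrightarrow> (\<forall>s\<in>N. complete_set E (pa E s) \<and> complete_set E (ch E s))"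
proof
  assume eq: "DAG_model N E M = DAG_model N (reverse_edges E) M"
  show "\<forall>s\<in>N. complete_set E (pa E s) \<and> complete_set E (ch E s)"
  proof (intro ballI conjI)
    fix s assume "s \<in> N"
    show "complete_set E (pa E s)"
      using DAG_model_ne_reverse[OF assms \<open>s \<in> N\<close>] eq by blast
    show "complete_set E (ch E s)"
      using DAG_model_ne_reverse[of N "reverse_edges E" U0 U1 s] assms \<open>s \<in> N\<close> eq
      by (auto simp: reverse_edges_subset)
  qed
next
  assume compl: "\<forall>s\<in>N. complete_set E (pa E s) \<and> complete_set E (ch E s)"
  have g: "\<forall>u\<in>N. prob_density (M u) (indicator (U0 u))"
    using assms(4) by (auto intro: prob_density_indicator simp: disjoint_unit_sets_def)
  have "DAG_model N E M \<subseteq> DAG_model N (reverse_edges E) M"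
    using assms(1-3) compl g by (rule DAG_model_subset_reverse)
  moreover have "DAG_model N (reverse_edges E) M \<subseteq> DAG_model N E M"
    using DAG_model_subset_reverse[of N "reverse_edges E"] assms(1-3) compl g
    by (auto simp: reverse_edges_subset)
  ultimately show "DAG_model N E M = DAG_model N (reverse_edges E) M" by blast
qed

end

section \<open>State spaces\<close>

lemma DAG_model_cong:
  assumes "\<forall>u\<in>N. M u = M' u" "\<forall>s\<in>N. pa E s \<subseteq> N"
  shows "DAG_model N E M = DAG_model N E M'"
proof -
  have "PiM P M = PiM P M'" if "P \<subseteq> N" for P
    using assms(1) that by (intro PiM_cong) auto
  then have "is_kernel M (pa E s) s = is_kernel M' (pa E s) s" if "s \<in> N" for s
    using assms that by (simp add: is_kernel_def fun_eq_iff)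
  moreover have "PiM N M = PiM N M'" by (simp add: \<open>\<And>P. P \<subseteq> N \<Longrightarrow> PiM P M = PiM P M'\<close>)
  ultimately show ?thesis unfolding DAG_model_def by auto
qed

lemma state_space_sigma_finite:
  assumes "state_space Ms"
  shows "sigma_finite_measure Ms"
proof -
  interpret lborel: product_sigma_finite "\<lambda>_::nat. lborel :: real measure" by standard
  show ?thesis
    using assms finite_measure.sigma_finite_measure[OF finite_measure_count_space] lborel.sigma_finite
    by (auto simp: state_space_def)
qed

lemma state_space_disjoint_unit_sets:
  assumes "state_space Ms" "a \<in> space Ms" "b \<in> space Ms" "a \<noteq> b"
  obtains U0 U1 where "disjoint_unit_sets Ms U0 U1"
  using assms(1) unfolding state_space_def
proof (elim disjE exE conjE)
  fix A assume "finite A" "Ms = count_space A"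
  then have "disjoint_unit_sets Ms {a} {b}"
    using assms(2-4) by (simp add: disjoint_unit_sets_def)
  then show thesis by (rule that)
next
  fix d assume d: "Ms = PiM {..<d} (\<lambda>_. lborel)"
  interpret lborel: product_sigma_finite "\<lambda>_::nat. lborel :: real measure" by standard
  have "0 < d"
    using assms(2-4) d by (cases d) (auto simp: space_PiM)
  define U0 where "U0 = PiE {..<d} (\<lambda>_. {0..1::real})"
  define U1 where "U1 = PiE {..<d} (\<lambda>i. if i = 0 then {2..3::real} else {0..1})"
  have "x 0 \<in> {0..1}" if "x \<in> U0" for x
    using PiE_mem[OF that[unfolded U0_def], of 0] \<open>0 < d\<close> by simp
  moreover have "x 0 \<in> {2..3}" if "x \<in> U1" for x
    using PiE_mem[OF that[unfolded U1_def], of 0] \<open>0 < d\<close> by simp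
  ultimately have "U0 \<inter> U1 = {}" by fastforce
  then have "disjoint_unit_sets Ms U0 U1"
    unfolding disjoint_unit_sets_def U0_def U1_def d
    by (auto intro!: sets_PiM_I_finite prod.neutral simp: lborel.emeasure_PiM)
  then show thesis by (rule that)
qed

lemma state_spaces_obtain_disjoint_unit_sets:
  assumes "\<forall>s\<in>N. state_space (M s)" "\<forall>s\<in>N. \<exists>a\<in>space (M s). \<exists>b\<in>space (M s). a \<noteq> b"
  obtains U0 U1 where "\<forall>u\<in>N. disjoint_unit_sets (M u) (U0 u) (U1 u)"
proof -
  have "\<exists>U. disjoint_unit_sets (M u) (fst U) (snd U)" if u: "u \<in> N" for u
  proof -
    obtain a b where ab: "a \<in> space (M u)" "b \<in> space (M u)" "a \<noteq> b"
      using bspec[OF assms(2) u] by auto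
    obtain U0 U1 where "disjoint_unit_sets (M u) U0 U1"
      using bspec[OF assms(1) u] ab by (rule state_space_disjoint_unit_sets)
    then show ?thesis by (intro exI[of _ "(U0, U1)"]) simp
  qed
  then obtain U where "\<forall>u\<in>N. disjoint_unit_sets (M u) (fst (U u)) (snd (U u))"
    by (metis bchoice)
  then show thesis by (rule that)
qed

theorem corollary2:
  fixes N :: "'n set" and E :: "('n \<times> 'n) set" and M :: "'n \<Rightarrow> (nat \<Rightarrow> real) measure"
  assumes "finite N" and "E \<subseteq> N \<times> N" and "acyclic E"
    and "\<forall>s\<in>N. state_space (M s)"
    and "\<forall>s\<in>N. \<exists>a\<in>space (M s). \<exists>b\<in>space (M s). a \<noteq> b"
  shows "DAG_model N E M = DAG_model N (reverse_edges E) M \<longleftrightarrow>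
         (\<forall>s\<in>N. complete_set E (pa E s) \<and> complete_set E (ch E s))"
proof -
  obtain U0 U1 where U: "\<forall>u\<in>N. disjoint_unit_sets (M u) (U0 u) (U1 u)"
    using assms(4,5) by (rule state_spaces_obtain_disjoint_unit_sets)
  text \<open>Outside \<open>N\<close> the state spaces are irrelevant; they are replaced by a finite measure
    to obtain a product of \<open>\<sigma>\<close>-finite measures.\<close>
  define M' where "M' u = (if u \<in> N then M u else count_space {})" for u
  interpret product_sigma_finite M'
    using assms(4) finite_measure.sigma_finite_measure[OF finite_measure_count_space[of "{} :: (nat \<Rightarrow> real) set"]]
    by (intro product_sigma_finite.intro) (simp add: M'_def state_space_sigma_finite)
  have same: "DAG_model N F M = DAG_model N F M'" if "F \<subseteq> N \<times> N" for F
    using that by (intro DAG_model_cong) (auto simp: M'_def pa_subset)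
  have "\<forall>u\<in>N. disjoint_unit_sets (M' u) (U0 u) (U1 u)"
    using U by (simp add: M'_def)
  then show ?thesis
    using DAG_model_eq_reverse_iff[OF assms(1-3)] same[OF assms(2)] same[OF reverse_edges_subset[OF assms(2)]]
    by simp
qed

end
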